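(* Let $K=(V,E)$ be a complete graph, $r:V\to\mathbb{Z}_+$ and $F\subseteq V$. Fix an ordering of $F$ by non-increasing $r$-value and an ordering of $V\setminus F$ by non-increasing $r$-value. Then there exist $k\in\{0,\dots,|F|\}$ and $\ell\in\{0,\dots,|V|-|F|\}$ such that the union of the first $k$ vertices of $F$ and the first $\ell$ vertices of $V\setminus F$ (in these orderings) is a minimum-size vector connectivity set for $(K,F,r)$.
   Context: For a vertex $v$ and a set $U\subseteq V$, a $v$--$U$ fan of order $k$ is a collection of $k$ paths, each connecting $v$ to a vertex of $U$, pairwise vertex-disjoint except at $v$ (if $v\in U$, the trivial one-vertex path $(v)$ may be one of them); $v$ is $k$-linked to $U$ if such a fan exists. A vector connectivity set for $(K,F,r)$ is a set $S\subseteq V$ such that every $v\in V\setminus S$ is $r(v)$-linked to $S\cup F$. *)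

theory Defs
  imports Main
begin

definition is_path :: "'a set \<Rightarrow> ('a \<Rightarrow> 'a \<Rightarrow> bool) \<Rightarrow> 'a list \<Rightarrow> bool" where
  "is_path V E p \<longleftrightarrow> p \<noteq> [] \<and> distinct p \<and> set p \<subseteq> V \<and>
     (\<forall>i. Suc i < length p \<longrightarrow> E (p ! i) (p ! Suc i))"

definition complete_adj :: "'a \<Rightarrow> 'a \<Rightarrow> bool" where
  "complete_adj u w \<longleftrightarrow> u \<noteq> w"

text \<open>A v--U fan of order k: a set of k paths, each starting at v and ending in U,
  pairwise vertex-disjoint except at v (the trivial path [v] is allowed when v is in U).\<close>

definition is_fan :: "'a set \<Rightarrow> ('a \<Rightarrow> 'a \<Rightarrow> bool) \<Rightarrow> 'a \<Rightarrow> 'a set \<Rightarrow> 'a list set \<Rightarrow> nat \<Rightarrow> bool" where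
  "is_fan V E v U P k \<longleftrightarrow> finite P \<and> card P = k \<and>
     (\<forall>p\<in>P. is_path V E p \<and> hd p = v \<and> last p \<in> U) \<and>
     (\<forall>p\<in>P. \<forall>q\<in>P. p \<noteq> q \<longrightarrow> set p \<inter> set q \<subseteq> {v})"

definition k_linked :: "'a set \<Rightarrow> ('a \<Rightarrow> 'a \<Rightarrow> bool) \<Rightarrow> 'a \<Rightarrow> nat \<Rightarrow> 'a set \<Rightarrow> bool" where
  "k_linked V E v k U \<longleftrightarrow> (\<exists>P. is_fan V E v U P k)"

definition is_vc_set :: "'a set \<Rightarrow> ('a \<Rightarrow> 'a \<Rightarrow> bool) \<Rightarrow> 'a set \<Rightarrow> ('a \<Rightarrow> nat) \<Rightarrow> 'a set \<Rightarrow> bool" where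
  "is_vc_set V E F r S \<longleftrightarrow> S \<subseteq> V \<and>
     (\<forall>v\<in>V - S. k_linked V E v (r v) (S \<union> F))"

definition is_min_vc_set :: "'a set \<Rightarrow> ('a \<Rightarrow> 'a \<Rightarrow> bool) \<Rightarrow> 'a set \<Rightarrow> ('a \<Rightarrow> nat) \<Rightarrow> 'a set \<Rightarrow> bool" where
  "is_min_vc_set V E F r S \<longleftrightarrow> is_vc_set V E F r S \<and>
     (\<forall>S'. is_vc_set V E F r S' \<longrightarrow> card S \<le> card S')"

end

theory Submission
  imports Defs
begin

text \<open>In a complete graph a vertex is k-linked to U exactly when k \<le> |U|: the endpoints of a
  fan are distinct, and conversely single edges from v form a fan. Hence S is a vector connectivity
  set iff r v \<le> |S \<union> F| = |F| + |S - F| for every v outside S. Given a minimum set S, exchange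
  S \<inter> F and S - F for the equally large prefixes of the two sorted lists: this keeps |S| and
  |S \<union> F|, and the vertices left outside have r-values no larger than before.\<close>

lemma fan_order_le_card:
  assumes "is_fan V E v U P k" "finite U"
  shows "k \<le> card U"
proof -
  have paths: "\<And>p. p \<in> P \<Longrightarrow> is_path V E p \<and> hd p = v \<and> last p \<in> U"
    and disjoint: "\<And>p q. p \<in> P \<Longrightarrow> q \<in> P \<Longrightarrow> p \<noteq> q \<Longrightarrow> set p \<inter> set q \<subseteq> {v}"
    and card_P: "card P = k"
    using assms(1) unfolding is_fan_def by auto
  have "inj_on last P"
  proof (rule inj_onI, rule ccontr)
    fix p q assume pq: "p \<in> P" "q \<in> P" "last p = last q" "p \<noteq> q"
    have "last p \<in> set p \<inter> set q"
      using paths[OF pq(1)] paths[OF pq(2)] pq(3) unfolding is_path_def by (metis IntI last_in_set)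
    then have "last p = v" using disjoint[OF pq(1,2,4)] by auto
    moreover have "\<And>s. s \<in> P \<Longrightarrow> last s = v \<Longrightarrow> s = [v]"
    proof -
      fix s assume "s \<in> P" "last s = v"
      with paths have "s \<noteq> []" "distinct s" "hd s = last s" unfolding is_path_def by auto
      then show "s = [v]" using \<open>last s = v\<close> by (cases s) (auto split: if_splits)
    qed
    ultimately show False using pq by metis
  qed
  moreover have "last ` P \<subseteq> U" using paths by auto
  ultimately show ?thesis using card_inj_on_le assms(2) card_P by blast
qed

lemma k_linked_complete_iff:
  assumes "finite V" "v \<in> V" "U \<subseteq> V"
  shows "k_linked V complete_adj v k U \<longleftrightarrow> k \<le> card U"
proof
  assume "k_linked V complete_adj v k U"
  then obtain P where "is_fan V complete_adj v U P k" unfolding k_linked_def by blast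
  then show "k \<le> card U" using finite_subset[OF assms(3,1)] by (rule fan_order_le_card)
next
  assume "k \<le> card U"
  then obtain W where W: "W \<subseteq> U" "card W = k" using obtain_subset_with_card_n by blast
  define edge where "edge u = (if u = v then [v] else [v, u])" for u
  have "inj_on edge W" unfolding edge_def by (rule inj_onI) (auto split: if_splits)
  then have "card (edge ` W) = k" using W by (simp add: card_image)
  moreover have "is_path V complete_adj (edge u) \<and> hd (edge u) = v \<and> last (edge u) \<in> U"
    if "u \<in> W" for u
    using that W assms(2,3) unfolding edge_def is_path_def complete_adj_def
    by (auto simp: less_Suc_eq)
  moreover have "set p \<inter> set q \<subseteq> {v}" if "p \<in> edge ` W" "q \<in> edge ` W" "p \<noteq> q" for p q
    using that unfolding edge_def by (auto split: if_splits)
  moreover have "finite (edge ` W)" using finite_subset[OF W(1) finite_subset[OF assms(3,1)]] by simp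
  ultimately have "is_fan V complete_adj v U (edge ` W) k" unfolding is_fan_def by blast
  then show "k_linked V complete_adj v k U" unfolding k_linked_def by blast
qed

lemma is_vc_set_complete_iff:
  assumes "finite V" "F \<subseteq> V"
  shows "is_vc_set V complete_adj F r S \<longleftrightarrow> S \<subseteq> V \<and> (\<forall>v\<in>V - S. r v \<le> card (S \<union> F))"
proof -
  have "k_linked V complete_adj v (r v) (S \<union> F) \<longleftrightarrow> r v \<le> card (S \<union> F)"
    if "S \<subseteq> V" "v \<in> V" for v
    using that assms by (intro k_linked_complete_iff) auto
  then show ?thesis unfolding is_vc_set_def by auto
qed

lemma ex_min_vc_set: "\<exists>S. is_min_vc_set V E F r S"
proof -
  have "is_vc_set V E F r V" unfolding is_vc_set_def by simp
  then show ?thesis unfolding is_min_vc_set_def by (rule ex_has_least_nat)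
qed

lemma sorted_take_card_bound:
  fixes B :: nat
  assumes "distinct ys" "sorted_wrt (\<lambda>a b. r a \<ge> r b) ys" "A \<subseteq> set ys"
    and bound: "\<forall>w\<in>set ys - A. r w \<le> B"
  shows "\<forall>v\<in>set ys - set (take (card A) ys). r v \<le> B"
proof
  fix v assume v: "v \<in> set ys - set (take (card A) ys)"
  then obtain j where j: "j < length ys" "ys ! j = v" by (auto simp: in_set_conv_nth)
  have "card A \<le> j"
  proof (rule ccontr)
    assume "\<not> card A \<le> j"
    then have "v \<in> set (take (card A) ys)" using j by (auto simp: in_set_conv_nth intro!: exI[of _ j])
    then show False using v by simp
  qed
  have "\<exists>i \<le> card A. ys ! i \<notin> A"
  proof (rule ccontr)
    assume "\<not> ?thesis"
    then have "(!) ys ` {0..card A} \<subseteq> A" by auto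
    then have "card ((!) ys ` {0..card A}) \<le> card A"
      using finite_subset[OF assms(3) finite_set] by (rule card_mono[rotated])
    moreover have "inj_on ((!) ys) {0..card A}"
      using assms(1) \<open>card A \<le> j\<close> j by (auto intro!: inj_onI simp: nth_eq_iff_index_eq)
    ultimately show False by (simp add: card_image)
  qed
  then obtain i where i: "i \<le> card A" "ys ! i \<notin> A" by blast
  have "r (ys ! i) \<le> B" using bound i \<open>card A \<le> j\<close> j by auto
  moreover have "r (ys ! j) \<le> r (ys ! i)"
    using sorted_wrt_nth_less[OF assms(2)] i \<open>card A \<le> j\<close> j by (cases "i = j") auto
  ultimately show "r v \<le> B" using j by simp
qed

lemma card_set_take: "distinct ys \<Longrightarrow> k \<le> length ys \<Longrightarrow> card (set (take k ys)) = k"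
  by (simp add: distinct_card)

lemma vc_set_sorted_prefixes:
  assumes "finite V" "F \<subseteq> V"
    and "distinct fs" "set fs = F" "sorted_wrt (\<lambda>a b. r a \<ge> r b) fs"
    and "distinct xs" "set xs = V - F" "sorted_wrt (\<lambda>a b. r a \<ge> r b) xs"
    and "is_vc_set V complete_adj F r S"
  defines "T \<equiv> set (take (card (S \<inter> F)) fs) \<union> set (take (card (S - F)) xs)"
  shows "is_vc_set V complete_adj F r T" "card T = card S"
proof -
  have S: "S \<subseteq> V" and S_bound: "\<forall>v\<in>V - S. r v \<le> card (S \<union> F)"
    using assms(9) is_vc_set_complete_iff[OF assms(1,2)] by auto
  have fin: "finite S" "finite F" using S assms(1,2) finite_subset by auto
  let ?Tf = "set (take (card (S \<inter> F)) fs)" and ?Tx = "set (take (card (S - F)) xs)"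
  have "length fs = card F" "length xs = card (V - F)" using assms(3,4,6,7) by (metis distinct_card)+
  moreover have "card (S \<inter> F) \<le> card F" "card (S - F) \<le> card (V - F)"
    using fin assms(1) S by (auto intro: card_mono)
  ultimately have "card (S \<inter> F) \<le> length fs" "card (S - F) \<le> length xs" by simp_all
  then have card_Tf: "card ?Tf = card (S \<inter> F)" and card_Tx: "card ?Tx = card (S - F)"
    using assms(3,6) card_set_take by blast+
  have Tf: "?Tf \<subseteq> F" and Tx: "?Tx \<subseteq> V - F"
    using assms(4,7) set_take_subset by metis+
  have "?Tf \<inter> ?Tx = {}" using Tf Tx by blast
  then have "card T = card (S \<inter> F) + card (S - F)"
    unfolding T_def using card_Tf card_Tx by (simp add: card_Un_disjoint)
  then show "card T = card S" using card_Int_Diff[OF fin(1)] by simp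
  have "card (T \<union> F) = card (S \<union> F)"
  proof -
    have "T \<union> F = F \<union> ?Tx" "S \<union> F = F \<union> (S - F)" using Tf unfolding T_def by auto
    moreover have "F \<inter> ?Tx = {}" "F \<inter> (S - F) = {}" using Tx by auto
    ultimately show ?thesis using card_Tx fin by (simp add: card_Un_disjoint del: Un_Diff_cancel)
  qed
  moreover have "\<forall>v\<in>F - ?Tf. r v \<le> card (S \<union> F)"
    using sorted_take_card_bound[OF assms(3,5), of "S \<inter> F"] assms(2,4) S_bound by auto
  moreover have "\<forall>v\<in>(V - F) - ?Tx. r v \<le> card (S \<union> F)"
    using sorted_take_card_bound[OF assms(6,8), of "S - F"] assms(7) S S_bound by auto
  ultimately show "is_vc_set V complete_adj F r T"
    unfolding is_vc_set_complete_iff[OF assms(1,2)] T_def using Tf Tx assms(2) by auto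
qed

theorem mainTheorem9:
  fixes V F :: "'a set" and r :: "'a \<Rightarrow> nat" and fs xs :: "'a list"
  assumes "finite V" and "F \<subseteq> V"
    and "distinct fs" and "set fs = F" and "sorted_wrt (\<lambda>a b. r a \<ge> r b) fs"
    and "distinct xs" and "set xs = V - F" and "sorted_wrt (\<lambda>a b. r a \<ge> r b) xs"
  shows "\<exists>k \<le> card F. \<exists>l \<le> card V - card F.
           is_min_vc_set V complete_adj F r (set (take k fs) \<union> set (take l xs))"
proof -
  obtain S where S: "is_min_vc_set V complete_adj F r S" using ex_min_vc_set by blast
  let ?T = "set (take (card (S \<inter> F)) fs) \<union> set (take (card (S - F)) xs)"
  have "is_min_vc_set V complete_adj F r ?T"
    using S vc_set_sorted_prefixes[OF assms, of S] unfolding is_min_vc_set_def by simp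
  moreover have "S \<subseteq> V" using S unfolding is_min_vc_set_def is_vc_set_def by simp
  then have "card (S \<inter> F) \<le> card F" "card (S - F) \<le> card V - card F"
    using assms(1,2) by (auto simp: card_mono card_Diff_subset[symmetric] finite_subset Diff_mono)
  ultimately show ?thesis by blast
qed

end
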